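(* Let $2\le p\le q$, $n=p+q$. Let $W_1,\ldots,W_l \subset \mathbb{R}^{p,q}$ be a finite family of pairwise distinct, non-empty open sets of intersection type. Then $W_1 \cup \cdots \cup W_l$ is not connected if and only if one of the following holds: (1) there exist $v \in \mathcal{C} \setminus \{0\}$, real numbers $\alpha_1,\ldots,\alpha_l$ and $1 \leq k_0 \leq l-1$ such that, up to permutation of the indices, $\alpha_1 > \cdots > \alpha_{k_0} \geq \alpha_{k_0+1} > \cdots > \alpha_l$, $W_i = H_{v,\alpha_i}$ for all $i \leq k_0$ and $W_i = H_{-v,-\alpha_i}$ for all $i > k_0$; or (2) $l=2$ and, up to permutation, $W_1 = v + U_S$ and $W_2 = v + U_T$ for some $v \in \mathbb{R}^{p,q}$.
   Context: On $\mathbb{R}^{p,q}$: $b(v,w) = -v_1w_1 - \cdots - v_pw_p + v_{p+1}w_{p+1} + \cdots + v_nw_n$, $q(v)=b(v,v)$, $\mathcal{C}=\{q=0\}$, $U_S=\{q>0\}$, $U_T=\{q<0\}$, and for $v\in\mathcal{C}\setminus\{0\}$, $\alpha\in\mathbb{R}$, $H_{v,\alpha}=\{w: b(v,w)>\alpha\}$. An open subset of $\mathbb{R}^{p,q}$ is of intersection type if it is of the form $v_0+U_S$ or $v_0+U_T$ for some $v_0\in\mathbb{R}^{p,q}$, or $H_{v_0,\alpha}$ for some $v_0\in\mathcal{C}\setminus\{0\}$ and $\alpha\in\mathbb{R}$. *)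

theory Defs
  imports "HOL-Analysis.Analysis"
begin

text \<open>R^{p,q} is modelled as real ^ ('p + 'q): the coordinates Inl i (i :: 'p) are the
  p negative ones, the coordinates Inr j (j :: 'q) the q positive ones; p = CARD('p), q = CARD('q).\<close>

definition bpq :: "real ^ ('p::finite + 'q::finite) \<Rightarrow> real ^ ('p + 'q) \<Rightarrow> real" where
  "bpq v w = - (\<Sum>i\<in>UNIV. v $ Inl i * w $ Inl i) + (\<Sum>j\<in>UNIV. v $ Inr j * w $ Inr j)"

definition qpq :: "real ^ ('p::finite + 'q::finite) \<Rightarrow> real" where
  "qpq v = bpq v v"

definition lightcone :: "(real ^ ('p::finite + 'q::finite)) set" where
  "lightcone = {v. qpq v = 0}"

definition U_S :: "(real ^ ('p::finite + 'q::finite)) set" where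
  "U_S = {v. qpq v > 0}"

definition U_T :: "(real ^ ('p::finite + 'q::finite)) set" where
  "U_T = {v. qpq v < 0}"

definition Hpq :: "real ^ ('p::finite + 'q::finite) \<Rightarrow> real \<Rightarrow> (real ^ ('p + 'q)) set" where
  "Hpq v \<alpha> = {w. bpq v w > \<alpha>}"

definition intersection_type :: "(real ^ ('p::finite + 'q::finite)) set \<Rightarrow> bool" where
  "intersection_type W \<longleftrightarrow>
     (\<exists>v0. W = (\<lambda>u. v0 + u) ` U_S \<or> W = (\<lambda>u. v0 + u) ` U_T) \<or>
     (\<exists>v0 \<alpha>. v0 \<in> lightcone - {0} \<and> W = Hpq v0 \<alpha>)"

end

theory Submission
  imports Defs
begin

text \<open>
  For \<open>p, q \<ge> 2\<close> every set of intersection type is connected: \<open>U_T\<close> retracts along segments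
  onto a punctured copy of \<open>\<real>\<^sup>p\<close>, \<open>U_S\<close> is \<open>U_T\<close> for the negated form, and the \<open>H(v, \<alpha>)\<close>
  are open half-spaces. Hence the union is disconnected iff the index set splits into two
  nonempty groups whose members are disjoint across the groups. A translate \<open>v + U_S\<close> meets
  every set of intersection type except \<open>v + U_T\<close>, and vice versa, so a split involving such a
  cone is the pair \<open>{v + U_S, v + U_T}\<close>. Two half-spaces \<open>H(v, \<alpha>)\<close> and \<open>H(w, \<beta>)\<close> are disjoint
  only if \<open>w\<close> is a negative multiple of \<open>v\<close>, so a split family of half-spaces consists of sets
  \<open>H(v, \<alpha>\<^sub>i)\<close> and \<open>H(-v, -\<beta>\<^sub>j)\<close> with every \<open>\<alpha>\<^sub>i \<ge> \<beta>\<^sub>j\<close>; sorting the thresholds gives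
  alternative (1).
\<close>

lemma sum_UNIV_Plus:
  "(\<Sum>k\<in>(UNIV::('a::finite + 'b::finite) set). f k) = (\<Sum>i\<in>UNIV. f (Inl i)) + (\<Sum>j\<in>UNIV. f (Inr j))"
  by (subst UNIV_Plus_UNIV[symmetric], subst sum.Plus) (auto simp: o_def)

definition qneg :: "real ^ ('p::finite + 'q::finite) \<Rightarrow> real" where
  "qneg z = (\<Sum>i\<in>UNIV. (z $ Inl i)\<^sup>2)"

definition qpos :: "real ^ ('p::finite + 'q::finite) \<Rightarrow> real" where
  "qpos z = (\<Sum>j\<in>UNIV. (z $ Inr j)\<^sup>2)"

lemma qpq_eq_qpos_minus_qneg: "qpq z = qpos z - qneg z"
  by (simp add: qpq_def bpq_def qpos_def qneg_def power2_eq_square)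

lemma qneg_nonneg: "qneg z \<ge> 0"
  by (simp add: qneg_def sum_nonneg)

lemma qpos_nonneg: "qpos z \<ge> 0"
  by (simp add: qpos_def sum_nonneg)

lemma qneg_eq_0_iff: "qneg z = 0 \<longleftrightarrow> (\<forall>i. z $ Inl i = 0)"
  by (simp add: qneg_def sum_nonneg_eq_0_iff)

lemma qpos_eq_0_iff: "qpos z = 0 \<longleftrightarrow> (\<forall>j. z $ Inr j = 0)"
  by (simp add: qpos_def sum_nonneg_eq_0_iff)

lemma qneg_plus_qpos: "qneg z + qpos z = z \<bullet> z"
  by (simp add: inner_vec_def sum_UNIV_Plus qneg_def qpos_def power2_eq_square)

lemma lightcone_nonzero_qneg_qpos_pos:
  assumes "v \<in> lightcone - {0}"
  shows "qneg v > 0" "qpos v > 0"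
proof -
  have "qneg v = qpos v"
    using assms by (simp add: lightcone_def qpq_eq_qpos_minus_qneg)
  moreover have "qneg v + qpos v > 0"
    using assms by (simp add: qneg_plus_qpos)
  ultimately show "qneg v > 0" "qpos v > 0"
    by auto
qed

lemma bpq_sym: "bpq v w = bpq w v"
  by (simp add: bpq_def mult.commute)

lemma bpq_add_left: "bpq (v + v') w = bpq v w + bpq v' w"
  by (simp add: bpq_def algebra_simps sum.distrib)

lemma bpq_add_right: "bpq w (v + v') = bpq w v + bpq w v'"
  by (simp add: bpq_def algebra_simps sum.distrib)

lemma bpq_scaleR_left: "bpq (c *\<^sub>R v) w = c * bpq v w"
  by (simp add: bpq_def algebra_simps sum_distrib_left)

lemma bpq_scaleR_right: "bpq w (c *\<^sub>R v) = c * bpq w v"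
  by (simp add: bpq_def algebra_simps sum_distrib_left)

lemma bpq_minus_left: "bpq (- v) w = - bpq v w"
  by (simp add: bpq_def sum_negf)

lemma bpq_minus_right: "bpq w (- v) = - bpq w v"
  by (simp add: bpq_def sum_negf)

lemma qpq_add: "qpq (x + y) = qpq x + 2 * bpq x y + qpq y"
  by (simp add: qpq_def bpq_add_left bpq_add_right bpq_sym[of y x])

lemma qpq_scaleR: "qpq (c *\<^sub>R x) = c\<^sup>2 * qpq x"
  by (simp add: qpq_def bpq_scaleR_left bpq_scaleR_right power2_eq_square)

lemma qpq_minus: "qpq (- x) = qpq x"
  by (simp add: qpq_def bpq_minus_left bpq_minus_right)

lemma qpq_diff: "qpq (x - y) = qpq x - 2 * bpq x y + qpq y"
  using qpq_add[of x "- y"] by (simp add: qpq_minus bpq_minus_right)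

lemma bpq_axis_Inl: "bpq d (axis (Inl i) 1) = - d $ Inl i"
  by (simp add: bpq_def axis_def if_distrib[where f="\<lambda>x. _ * x"] cong: if_cong)

lemma bpq_axis_Inr: "bpq d (axis (Inr j) 1) = d $ Inr j"
  by (simp add: bpq_def axis_def if_distrib[where f="\<lambda>x. _ * x"] cong: if_cong)

lemma qpq_axis_Inl: "qpq (axis (Inl i) 1 :: real ^ ('p::finite + 'q::finite)) = -1"
  by (simp add: qpq_def bpq_axis_Inl)

lemma qpq_axis_Inr: "qpq (axis (Inr j) 1 :: real ^ ('p::finite + 'q::finite)) = 1"
  by (simp add: qpq_def bpq_axis_Inr)

definition proj_neg :: "real ^ ('p::finite + 'q::finite) \<Rightarrow> real ^ ('p + 'q)" where
  "proj_neg z = (\<chi> k. case k of Inl i \<Rightarrow> z $ k | Inr j \<Rightarrow> 0)"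

definition proj_pos :: "real ^ ('p::finite + 'q::finite) \<Rightarrow> real ^ ('p + 'q)" where
  "proj_pos z = (\<chi> k. case k of Inl i \<Rightarrow> 0 | Inr j \<Rightarrow> z $ k)"

lemma proj_neg_plus_proj_pos: "proj_neg z + proj_pos z = z"
  by (simp add: proj_neg_def proj_pos_def vec_eq_iff split: sum.split)

lemma qpq_proj_neg: "qpq (proj_neg z) = - qneg z"
  by (simp add: qpq_eq_qpos_minus_qneg qpos_def qneg_def proj_neg_def)

lemma qpq_proj_pos: "qpq (proj_pos z) = qpos z"
  by (simp add: qpq_eq_qpos_minus_qneg qpos_def qneg_def proj_pos_def)

lemma bpq_proj_pos: "bpq z (proj_pos z) = qpos z"
  by (simp add: bpq_def qpos_def proj_pos_def power2_eq_square)

subsection \<open>Exchanging the roles of p and q\<close>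

text \<open>\<open>\<real>\<^sup>p\<^sup>,\<^sup>q\<close> with the negated form is \<open>\<real>\<^sup>q\<^sup>,\<^sup>p\<close>; this transfers statements about \<open>U_S\<close> to \<open>U_T\<close>.\<close>

definition swap_pq :: "real ^ ('p::finite + 'q::finite) \<Rightarrow> real ^ ('q + 'p)" where
  "swap_pq z = (\<chi> k. z $ (case k of Inl j \<Rightarrow> Inr j | Inr i \<Rightarrow> Inl i))"

lemma swap_pq_swap_pq [simp]: "swap_pq (swap_pq z) = z"
  by (simp add: swap_pq_def vec_eq_iff split: sum.split)

lemma linear_swap_pq: "linear swap_pq"
  by (auto simp: linear_iff vec_eq_iff swap_pq_def)

lemma swap_pq_diff [simp]: "swap_pq (x - y) = swap_pq x - swap_pq y"
  by (rule linear_diff[OF linear_swap_pq])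

lemma swap_pq_eq_0_iff [simp]: "swap_pq z = 0 \<longleftrightarrow> z = 0"
  by (metis swap_pq_swap_pq linear_0[OF linear_swap_pq])

lemma bpq_swap_pq [simp]: "bpq (swap_pq v) (swap_pq w) = - bpq v w"
  by (simp add: bpq_def swap_pq_def)

lemma qpq_swap_pq [simp]: "qpq (swap_pq z) = - qpq z"
  by (simp add: qpq_def)

lemma qpq_swap_pq_diff: "qpq (swap_pq x - v) = - qpq (x - swap_pq v)"
  by (metis qpq_swap_pq swap_pq_diff swap_pq_swap_pq)

lemma image_swap_pq: "swap_pq ` A = {z. swap_pq z \<in> A}"
  by (auto intro: image_eqI[where x="swap_pq _"])

lemma translate_U_S: "(+) v0 ` U_S = {x. qpq (x - v0) > 0}"
  by (force simp: U_S_def)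

lemma translate_U_T: "(+) v0 ` U_T = {x. qpq (x - v0) < 0}"
  by (force simp: U_T_def)

lemma swap_pq_translate_U_S: "swap_pq ` (+) v0 ` U_S = (+) (swap_pq v0) ` U_T"
  by (auto simp: image_swap_pq translate_U_S translate_U_T qpq_swap_pq_diff)

lemma swap_pq_translate_U_T: "swap_pq ` (+) v0 ` U_T = (+) (swap_pq v0) ` U_S"
  by (auto simp: image_swap_pq translate_U_S translate_U_T qpq_swap_pq_diff)

lemma swap_pq_Hpq: "swap_pq ` Hpq v \<alpha> = Hpq (- swap_pq v) \<alpha>"
  by (auto simp: image_swap_pq Hpq_def bpq_minus_left simp flip: bpq_swap_pq)

lemma inj_swap_pq: "inj swap_pq"
  by (metis injI swap_pq_swap_pq)

lemma intersection_type_swap_pq: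
  fixes Y :: "(real ^ ('p::finite + 'q::finite)) set"
  assumes "intersection_type Y"
  shows "intersection_type (swap_pq ` Y)"
proof -
  from assms consider (S) v0 where "Y = (+) v0 ` U_S" | (T) v0 where "Y = (+) v0 ` U_T"
    | (H) v \<alpha> where "v \<in> lightcone - {0}" "Y = Hpq v \<alpha>"
    unfolding intersection_type_def by blast
  then show ?thesis
  proof cases
    case S
    then show ?thesis
      unfolding intersection_type_def S swap_pq_translate_U_S by blast
  next
    case T
    then show ?thesis
      unfolding intersection_type_def T swap_pq_translate_U_T by blast
  next
    case (H v \<alpha>)
    then have "- swap_pq v \<in> lightcone - {0}"
      by (simp add: lightcone_def qpq_minus)
    then show ?thesis
      unfolding intersection_type_def H(2) swap_pq_Hpq by blast
  qed
qed

subsection \<open>Connectedness of sets of intersection type\<close>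

lemma connected_if_segments_to_core:
  fixes S A :: "'a::real_normed_vector set"
  assumes "connected A" "A \<noteq> {}" "A \<subseteq> S"
    and "\<And>z. z \<in> S \<Longrightarrow> f z \<in> A" "\<And>z. z \<in> S \<Longrightarrow> closed_segment z (f z) \<subseteq> S"
  shows "connected S"
proof -
  have "S = \<Union>((\<lambda>z. closed_segment z (f z) \<union> A) ` S)"
    using assms(3,5) by blast
  moreover have "connected (\<Union>((\<lambda>z. closed_segment z (f z) \<union> A) ` S))"
  proof (rule connected_Union)
    show "connected s" if "s \<in> (\<lambda>z. closed_segment z (f z) \<union> A) ` S" for s
      using that assms(1,4) by (auto intro!: connected_Un)
    show "\<Inter>((\<lambda>z. closed_segment z (f z) \<union> A) ` S) \<noteq> {}"
      using assms(2) by blast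
  qed
  ultimately show ?thesis
    by simp
qed

lemma closed_segment_proj_neg_subset_U_T:
  assumes "z \<in> U_T"
  shows "closed_segment z (proj_neg z) \<subseteq> U_T"
proof
  have "qpos z < qneg z"
    using assms by (simp add: U_T_def qpq_eq_qpos_minus_qneg)
  fix y assume "y \<in> closed_segment z (proj_neg z)"
  then obtain u where u: "0 \<le> u" "u \<le> 1" "y = (1 - u) *\<^sub>R z + u *\<^sub>R proj_neg z"
    by (auto simp: closed_segment_def)
  have "qneg y = qneg z"
    by (simp add: u qneg_def proj_neg_def algebra_simps)
  moreover have "qpos y = (1 - u)\<^sup>2 * qpos z"
    by (simp add: u qpos_def proj_neg_def sum_distrib_left power_mult_distrib)
  moreover have "(1 - u)\<^sup>2 * qpos z \<le> qpos z"
    using u qpos_nonneg[of z] by (intro mult_left_le_one_le) (auto simp: power_le_one)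
  ultimately show "y \<in> U_T"
    using \<open>qpos z < qneg z\<close> by (simp add: U_T_def qpq_eq_qpos_minus_qneg)
qed

definition embed_neg :: "real ^ 'p \<Rightarrow> real ^ ('p::finite + 'q::finite)" where
  "embed_neg x = (\<chi> k. case k of Inl i \<Rightarrow> x $ i | Inr j \<Rightarrow> 0)"

lemma connected_U_T:
  assumes "2 \<le> CARD('p)"
  shows "connected (U_T :: (real ^ ('p::finite + 'q::finite)) set)"
proof (rule connected_if_segments_to_core)
  let ?A = "(embed_neg :: real ^ 'p \<Rightarrow> real ^ ('p + 'q)) ` (- {0})"
  have "linear (embed_neg :: real ^ 'p \<Rightarrow> real ^ ('p + 'q))"
    by (auto simp: linear_iff vec_eq_iff embed_neg_def split: sum.split)
  then show "connected ?A"
    using assms by (intro connected_continuous_image connected_punctured_universe linear_continuous_on)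
      (auto simp: linear_conv_bounded_linear)
  have "(1 :: real ^ 'p) \<noteq> 0"
    by (simp add: vec_eq_iff)
  then show "?A \<noteq> {}"
    by blast
  have "embed_neg x \<in> (U_T :: (real ^ ('p + 'q)) set)" if "x \<noteq> 0" for x :: "real ^ 'p"
  proof -
    have "qneg (embed_neg x :: real ^ ('p + 'q)) = x \<bullet> x" "qpos (embed_neg x :: real ^ ('p + 'q)) = 0"
      by (simp_all add: qneg_def qpos_def embed_neg_def inner_vec_def power2_eq_square)
    with that show ?thesis
      by (simp add: U_T_def qpq_eq_qpos_minus_qneg)
  qed
  then show "?A \<subseteq> U_T"
    by blast
  fix z :: "real ^ ('p + 'q)"
  assume z: "z \<in> U_T"
  then have "qpos z < qneg z"
    by (simp add: U_T_def qpq_eq_qpos_minus_qneg)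
  then have "(\<chi> i. z $ Inl i) \<noteq> (0 :: real ^ 'p)"
    using qpos_nonneg[of z] by (auto simp: vec_eq_iff qneg_eq_0_iff[symmetric])
  moreover have "proj_neg z = embed_neg (\<chi> i. z $ Inl i)"
    by (simp add: proj_neg_def embed_neg_def vec_eq_iff split: sum.split)
  ultimately show "proj_neg z \<in> ?A"
    by auto
  show "closed_segment z (proj_neg z) \<subseteq> U_T"
    using z by (rule closed_segment_proj_neg_subset_U_T)
qed

lemma connected_U_S:
  assumes "2 \<le> CARD('q)"
  shows "connected (U_S :: (real ^ ('p::finite + 'q::finite)) set)"
proof -
  have "U_S = swap_pq ` (U_T :: (real ^ ('q + 'p)) set)"
    by (auto simp: image_swap_pq U_S_def U_T_def)
  then show ?thesis
    using connected_U_T[OF assms] linear_swap_pq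
    by (metis connected_continuous_image linear_continuous_on linear_conv_bounded_linear)
qed

lemma connected_translate: "connected S \<Longrightarrow> connected ((+) v0 ` (S :: (real ^ 'n) set))"
  by (intro connected_continuous_image continuous_intros)

definition Jpq :: "real ^ ('p::finite + 'q::finite) \<Rightarrow> real ^ ('p + 'q)" where
  "Jpq v = (\<chi> k. case k of Inl i \<Rightarrow> - v $ k | Inr j \<Rightarrow> v $ k)"

lemma bpq_eq_inner: "bpq v w = Jpq v \<bullet> w"
  by (simp add: bpq_def Jpq_def inner_vec_def sum_UNIV_Plus sum_negf)

lemma Hpq_eq_halfspace: "Hpq v \<alpha> = {w. Jpq v \<bullet> w > \<alpha>}"
  by (simp add: Hpq_def bpq_eq_inner)

lemma connected_intersection_type:
  assumes "2 \<le> CARD('p)" "2 \<le> CARD('q)"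
    and "intersection_type (W :: (real ^ ('p::finite + 'q::finite)) set)"
  shows "connected W"
  using assms(3) connected_translate[OF connected_U_S[OF assms(2)]]
    connected_translate[OF connected_U_T[OF assms(1)]]
  unfolding intersection_type_def Hpq_eq_halfspace
  by (metis convex_connected convex_halfspace_gt)

subsection \<open>Which sets of intersection type can be disjoint\<close>

lemma eventually_quadratic_pos:
  fixes a b c :: real
  assumes "a > 0"
  shows "\<forall>\<^sub>F t in at_top. a * t\<^sup>2 + b * t + c > 0"
proof (rule eventually_at_top_linorderI)
  fix t assume t: "t \<ge> max 1 ((\<bar>b\<bar> + \<bar>c\<bar> + 1) / a)"
  then have "a * t \<ge> \<bar>b\<bar> + \<bar>c\<bar> + 1"
    using assms by (simp add: pos_divide_le_eq mult.commute)
  then have "a * t\<^sup>2 \<ge> (\<bar>b\<bar> + \<bar>c\<bar> + 1) * t"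
    using t by (simp add: power2_eq_square mult_right_mono mult.assoc[symmetric])
  moreover have "(\<bar>c\<bar> + 1) * t \<ge> (\<bar>c\<bar> + 1) * 1"
    using t by (intro mult_left_mono) auto
  moreover have "b * t \<ge> - \<bar>b\<bar> * t"
    using t by (intro mult_right_mono) auto
  ultimately show "a * t\<^sup>2 + b * t + c > 0"
    by (simp add: algebra_simps)
qed

lemma eventually_gt_mult_at_top:
  fixes a c :: real
  assumes "a > 0"
  shows "\<forall>\<^sub>F t in at_top. t * a > c"
  using eventually_gt_at_top[of "c / a"] by eventually_elim (use assms in \<open>simp add: pos_divide_less_eq\<close>)

lemma eventually_qpq_ray_pos:
  assumes "qpq w > 0"
  shows "\<forall>\<^sub>F t in at_top. qpq (c + t *\<^sub>R w) > 0"
proof -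
  have "qpq (c + t *\<^sub>R w) = qpq w * t\<^sup>2 + 2 * bpq c w * t + qpq c" for t
    by (simp add: qpq_add qpq_scaleR bpq_scaleR_right algebra_simps)
  then show ?thesis
    using eventually_quadratic_pos[OF assms] by simp
qed

lemma translates_U_S_meet:
  fixes v0 v1 :: "real ^ ('p::finite + 'q::finite)"
  shows "(+) v0 ` U_S \<inter> (+) v1 ` U_S \<noteq> {}"
proof -
  let ?w = "axis (Inr undefined) 1 :: real ^ ('p + 'q)"
  have "\<forall>\<^sub>F t in at_top. qpq (0 + t *\<^sub>R ?w) > 0 \<and> qpq ((v0 - v1) + t *\<^sub>R ?w) > 0"
    by (intro eventually_conj eventually_qpq_ray_pos) (simp_all add: qpq_axis_Inr)
  then obtain t where "qpq (t *\<^sub>R ?w) > 0" "qpq ((v0 - v1) + t *\<^sub>R ?w) > 0"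
    using eventually_happens'[OF trivial_limit_at_top_linorder] by auto
  then have "v0 + t *\<^sub>R ?w \<in> (+) v0 ` U_S \<inter> (+) v1 ` U_S"
    unfolding translate_U_S by (simp add: algebra_simps)
  then show ?thesis
    by blast
qed

lemma U_S_translate_meets_Hpq:
  assumes "v \<in> lightcone - {0}"
  shows "(+) v0 ` U_S \<inter> Hpq v \<alpha> \<noteq> {}"
proof -
  have pos: "qpos v > 0"
    using lightcone_nonzero_qneg_qpos_pos[OF assms] by simp
  have "\<forall>\<^sub>F t in at_top. qpq (0 + t *\<^sub>R proj_pos v) > 0 \<and> t * qpos v > \<alpha> - bpq v v0"
    using pos by (intro eventually_conj eventually_qpq_ray_pos eventually_gt_mult_at_top)
      (simp_all add: qpq_proj_pos)
  then obtain t where "qpq (t *\<^sub>R proj_pos v) > 0" "t * qpos v > \<alpha> - bpq v v0"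
    using eventually_happens'[OF trivial_limit_at_top_linorder] by auto
  then have "v0 + t *\<^sub>R proj_pos v \<in> (+) v0 ` U_S \<inter> Hpq v \<alpha>"
    by (simp add: translate_U_S Hpq_def bpq_add_right bpq_scaleR_right bpq_proj_pos)
  then show ?thesis
    by blast
qed

lemma exists_qpq_pos_qpq_diff_neg_if_qneg_eq_0:
  fixes d :: "real ^ ('p::finite + 'q::finite)"
  assumes "qneg d = 0" "qpos d > 0"
  shows "\<exists>y. qpq y > 0 \<and> qpq (y - d) < 0"
proof -
  define \<epsilon> where "\<epsilon> = sqrt (qpos d / 2)"
  let ?e = "axis (Inl undefined) 1 :: real ^ ('p + 'q)"
  have "\<epsilon>\<^sup>2 = qpos d / 2"
    using assms by (simp add: \<epsilon>_def)
  moreover have "bpq d ?e = 0"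
    using assms by (simp add: bpq_axis_Inl qneg_eq_0_iff)
  moreover have "qpq d = qpos d"
    using assms by (simp add: qpq_eq_qpos_minus_qneg)
  ultimately have "qpq (d + \<epsilon> *\<^sub>R ?e) = qpos d / 2" "qpq (d + \<epsilon> *\<^sub>R ?e - d) = - (qpos d / 2)"
    by (simp_all add: qpq_add qpq_scaleR bpq_scaleR_right qpq_axis_Inl)
  then show ?thesis
    using assms by (intro exI[of _ "d + \<epsilon> *\<^sub>R ?e"]) simp
qed

lemma exists_qpq_pos_qpq_diff_neg_if_qpos_eq_0:
  fixes d :: "real ^ ('p::finite + 'q::finite)"
  assumes "qpos d = 0" "qneg d > 0"
  shows "\<exists>y. qpq y > 0 \<and> qpq (y - d) < 0"
proof -
  define \<epsilon> where "\<epsilon> = sqrt (qneg d / 2)"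
  let ?e = "axis (Inr undefined) 1 :: real ^ ('p + 'q)"
  have "\<epsilon>\<^sup>2 = qneg d / 2"
    using assms by (simp add: \<epsilon>_def)
  moreover have "bpq d ?e = 0"
    using assms by (simp add: bpq_axis_Inr qpos_eq_0_iff)
  moreover have "qpq d = - qneg d"
    using assms by (simp add: qpq_eq_qpos_minus_qneg)
  ultimately have "qpq (\<epsilon> *\<^sub>R ?e) = qneg d / 2" "qpq (\<epsilon> *\<^sub>R ?e - d) = - (qneg d / 2)"
    by (simp_all add: qpq_diff qpq_scaleR bpq_scaleR_left bpq_sym[of ?e d] qpq_axis_Inr)
  then show ?thesis
    using assms by (intro exI[of _ "\<epsilon> *\<^sub>R ?e"]) simp
qed

lemma exists_qpq_pos_qpq_diff_neg:
  fixes d :: "real ^ ('p::finite + 'q::finite)"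
  assumes "d \<noteq> 0"
  shows "\<exists>y. qpq y > 0 \<and> qpq (y - d) < 0"
proof -
  have "qneg d + qpos d > 0"
    using assms by (simp add: qneg_plus_qpos)
  then consider "qneg d > 0" "qpos d > 0" | "qneg d = 0" "qpos d > 0" | "qpos d = 0" "qneg d > 0"
    using qneg_nonneg[of d] qpos_nonneg[of d] by linarith
  then show ?thesis
  proof cases
    case 1
    have "proj_pos d - d = - proj_neg d"
      using proj_neg_plus_proj_pos[of d] by (simp add: algebra_simps)
    then show ?thesis
      using 1 by (intro exI[of _ "proj_pos d"]) (simp add: qpq_proj_pos qpq_minus qpq_proj_neg)
  qed (simp_all add: exists_qpq_pos_qpq_diff_neg_if_qneg_eq_0 exists_qpq_pos_qpq_diff_neg_if_qpos_eq_0)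
qed

lemma translates_U_S_U_T_meet:
  assumes "v0 \<noteq> v1"
  shows "(+) v0 ` U_S \<inter> (+) v1 ` U_T \<noteq> {}"
proof -
  obtain y where "qpq y > 0" "qpq (y - (v1 - v0)) < 0"
    using exists_qpq_pos_qpq_diff_neg[of "v1 - v0"] assms by auto
  then have "v0 + y \<in> (+) v0 ` U_S \<inter> (+) v1 ` U_T"
    unfolding translate_U_S translate_U_T by (simp add: algebra_simps)
  then show ?thesis
    by blast
qed

lemma disjoint_U_S_translate:
  assumes "intersection_type Y" "(+) v0 ` U_S \<inter> Y = {}"
  shows "Y = (+) v0 ` U_T"
proof -
  from assms(1) consider (S) v1 where "Y = (+) v1 ` U_S" | (T) v1 where "Y = (+) v1 ` U_T"
    | (H) v \<alpha> where "v \<in> lightcone - {0}" "Y = Hpq v \<alpha>"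
    unfolding intersection_type_def by blast
  then show ?thesis
  proof cases
    case S
    then show ?thesis
      using assms(2) translates_U_S_meet by blast
  next
    case (T v1)
    then show ?thesis
      using assms(2) translates_U_S_U_T_meet[of v0 v1] by blast
  next
    case H
    then show ?thesis
      using assms(2) U_S_translate_meets_Hpq by blast
  qed
qed

lemma disjoint_U_T_translate:
  fixes Y :: "(real ^ ('p::finite + 'q::finite)) set"
  assumes "intersection_type Y" "(+) v0 ` U_T \<inter> Y = {}"
  shows "Y = (+) v0 ` U_S"
proof -
  have "(+) (swap_pq v0) ` U_S \<inter> swap_pq ` Y = swap_pq ` ((+) v0 ` U_T \<inter> Y)"
    by (simp only: image_Int[OF inj_swap_pq] swap_pq_translate_U_T)
  with assms have "swap_pq ` Y = (+) (swap_pq v0) ` U_T"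
    by (intro disjoint_U_S_translate intersection_type_swap_pq) simp_all
  then have "swap_pq ` Y = swap_pq ` (+) v0 ` U_S"
    by (simp only: swap_pq_translate_U_S)
  then show ?thesis
    by (simp only: inj_image_eq_iff[OF inj_swap_pq])
qed

lemma halfspaces_disjoint_imp_antiparallel:
  fixes a b :: "'a::real_inner"
  assumes "a \<noteq> 0" "b \<noteq> 0" "{x. a \<bullet> x > \<alpha>} \<inter> {x. b \<bullet> x > \<beta>} = {}"
  shows "\<exists>c>0. b = (- c) *\<^sub>R a"
proof (rule ccontr)
  assume not_antiparallel: "\<not> (\<exists>c>0. b = (- c) *\<^sub>R a)"
  \<comment> \<open>then \<open>u = \<parallel>b\<parallel> a + \<parallel>a\<parallel> b\<close> has positive inner product with both normals\<close>
  define k where "k = a \<bullet> b + norm a * norm b"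
  have "k \<noteq> 0"
  proof
    assume "k = 0"
    then have "(- a) \<bullet> b = norm (- a) * norm b"
      by (simp add: k_def)
    then have "norm a *\<^sub>R b = (- norm b) *\<^sub>R a"
      unfolding norm_cauchy_schwarz_eq by simp
    then have "(1 / norm a) *\<^sub>R (norm a *\<^sub>R b) = (- (norm b / norm a)) *\<^sub>R a"
      by simp
    then have "b = (- (norm b / norm a)) *\<^sub>R a"
      using assms(1) by simp
    then show False
      using not_antiparallel assms by auto
  qed
  moreover have "\<bar>a \<bullet> b\<bar> \<le> norm a * norm b"
    by (rule Cauchy_Schwarz_ineq2)
  ultimately have k: "k > 0"
    unfolding k_def by linarith
  define u where "u = norm b *\<^sub>R a + norm a *\<^sub>R b"
  have "a \<bullet> u = norm a * k" "b \<bullet> u = norm b * k"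
    by (simp_all add: u_def k_def inner_add_right algebra_simps dot_square_norm power2_eq_square
        inner_commute[of b a])
  moreover have "\<forall>\<^sub>F t in at_top. t * (norm a * k) > \<alpha> \<and> t * (norm b * k) > \<beta>"
    using assms k by (intro eventually_conj eventually_gt_mult_at_top) auto
  then obtain t where "t * (norm a * k) > \<alpha>" "t * (norm b * k) > \<beta>"
    using eventually_happens'[OF trivial_limit_at_top_linorder] by auto
  ultimately have "t *\<^sub>R u \<in> {x. a \<bullet> x > \<alpha>} \<inter> {x. b \<bullet> x > \<beta>}"
    by simp
  then show False
    using assms(3) by blast
qed

lemma Jpq_Jpq [simp]: "Jpq (Jpq v) = v"
  by (simp add: Jpq_def vec_eq_iff split: sum.split)

lemma Jpq_scaleR: "Jpq (c *\<^sub>R v) = c *\<^sub>R Jpq v"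
  by (simp add: Jpq_def vec_eq_iff split: sum.split)

lemma Jpq_eq_0_iff [simp]: "Jpq v = 0 \<longleftrightarrow> v = 0"
  by (metis Jpq_Jpq Jpq_scaleR scaleR_zero_left)

lemma open_Hpq: "open (Hpq v \<alpha>)"
  unfolding Hpq_eq_halfspace by (rule open_halfspace_gt)

lemma Hpq_scaleR: "c > 0 \<Longrightarrow> Hpq (c *\<^sub>R v) \<beta> = Hpq v (\<beta> / c)"
  by (auto simp: Hpq_def bpq_scaleR_left pos_divide_less_eq mult.commute)

lemma Hpq_disjoint_imp_opposite:
  assumes "v \<noteq> 0" "w \<noteq> 0" "Hpq v \<alpha> \<inter> Hpq w \<beta> = {}"
  shows "\<exists>\<gamma>. Hpq w \<beta> = Hpq (- v) \<gamma>"
proof -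
  obtain c where "c > 0" "Jpq w = (- c) *\<^sub>R Jpq v"
    using halfspaces_disjoint_imp_antiparallel[of "Jpq v" "Jpq w" \<alpha> \<beta>] assms
    unfolding Hpq_eq_halfspace by auto
  then have "c > 0" "w = c *\<^sub>R (- v)"
    by (metis Jpq_Jpq Jpq_scaleR scaleR_minus_left scaleR_minus_right)+
  then show ?thesis
    using Hpq_scaleR by blast
qed

lemma bpq_surj: "v \<noteq> 0 \<Longrightarrow> \<exists>x. bpq v x = r"
  by (metis Jpq_eq_0_iff bpq_eq_inner inner_scaleR_right inner_eq_zero_iff nonzero_divide_eq_eq)

lemma Hpq_opposite_disjoint_imp_le:
  assumes "v \<noteq> 0" "Hpq v \<alpha> \<inter> Hpq (- v) \<beta> = {}"
  shows "- \<beta> \<le> \<alpha>"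
proof (rule ccontr)
  assume "\<not> - \<beta> \<le> \<alpha>"
  moreover obtain x where "bpq v x = (\<alpha> - \<beta>) / 2"
    using bpq_surj[OF assms(1)] by blast
  ultimately have "x \<in> Hpq v \<alpha> \<inter> Hpq (- v) \<beta>"
    by (auto simp: Hpq_def bpq_minus_left)
  then show False
    using assms(2) by blast
qed

subsection \<open>Sorting thresholds\<close>

lemma exists_decreasing_enumeration:
  fixes f :: "'a \<Rightarrow> 'b::linorder"
  assumes "finite S" "inj_on f S"
  shows "\<exists>r. bij_betw r {1..card S} S \<and> (\<forall>i j. 1 \<le> i \<longrightarrow> i < j \<longrightarrow> j \<le> card S \<longrightarrow> f (r j) < f (r i))"
proof -
  define xs where "xs = sorted_list_of_set (f ` S)"
  have xs: "sorted_wrt (<) xs" "set xs = f ` S" "length xs = card S"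
    using assms by (simp_all add: xs_def card_image)
  define r where "r = the_inv_into S f \<circ> (!) xs \<circ> (\<lambda>i. card S - i)"
  have "bij_betw (\<lambda>i. card S - i) {1..card S} {..<length xs}"
    using xs(3) by (intro bij_betwI[where g = "\<lambda>i. card S - i"]) auto
  moreover have "bij_betw ((!) xs) {..<length xs} (f ` S)"
    using xs by (intro bij_betw_nth) (simp_all add: strict_sorted_iff)
  moreover have "bij_betw (the_inv_into S f) (f ` S) S"
    using assms(2) by (simp add: bij_betw_the_inv_into inj_on_imp_bij_betw)
  ultimately have "bij_betw r {1..card S} S"
    unfolding r_def by (intro bij_betw_trans)
  moreover have "f (r j) < f (r i)" if "1 \<le> i" "i < j" "j \<le> card S" for i j
  proof -
    have "xs ! (card S - j) < xs ! (card S - i)"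
      using sorted_wrt_nth_less[OF xs(1), of "card S - j" "card S - i"] that xs(3) by auto
    moreover have "xs ! (card S - k) \<in> f ` S" if "k \<in> {i, j}" for k
      using that \<open>1 \<le> i\<close> \<open>i < j\<close> \<open>j \<le> card S\<close> xs(2,3) nth_mem[of "card S - k" xs] by auto
    ultimately show ?thesis
      using assms(2) by (simp add: r_def f_the_inv_into_f)
  qed
  ultimately show ?thesis
    by blast
qed

lemma permutes_concat:
  fixes m n :: nat
  assumes "bij_betw r {1..m} J" "bij_betw s {1..n} K" "J \<inter> K = {}" "J \<union> K = {1..m + n}"
  shows "(\<lambda>i. if i \<in> {1..m} then r i else if i \<in> {m + 1..m + n} then s (i - m) else i)
    permutes {1..m + n}"
    (is "?\<sigma> permutes _")
proof (rule bij_imp_permutes)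
  have "bij_betw ?\<sigma> {1..m} J"
    using assms(1) by (rule bij_betw_cong[THEN iffD1, rotated]) auto
  moreover have "bij_betw (\<lambda>i. i - m) {m + 1..m + n} {1..n}"
    by (rule bij_betwI[where g="\<lambda>i. i + m"]) auto
  then have "bij_betw (s \<circ> (\<lambda>i. i - m)) {m + 1..m + n} K"
    using assms(2) by (rule bij_betw_trans)
  then have "bij_betw ?\<sigma> {m + 1..m + n} K"
    by (rule bij_betw_cong[THEN iffD1, rotated]) auto
  ultimately have "bij_betw ?\<sigma> ({1..m} \<union> {m + 1..m + n}) (J \<union> K)"
    using assms(3) by (rule bij_betw_combine)
  moreover have "{1..m} \<union> {m + 1..m + n} = {1..m + n}"
    by auto
  ultimately show "bij_betw ?\<sigma> {1..m + n} {1..m + n}"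
    using assms(4) by simp
qed auto

lemma merge_decreasing_enumerations:
  fixes f g :: "nat \<Rightarrow> 'a::linorder"
  assumes part: "J \<union> K = {1..l}" "J \<inter> K = {}" and ne: "J \<noteq> {}" "K \<noteq> {}"
    and inj: "inj_on f J" "inj_on g K" and le: "\<forall>i\<in>J. \<forall>j\<in>K. g j \<le> f i"
  obtains \<sigma> \<alpha> k0 where "\<sigma> permutes {1..l}" "1 \<le> k0" "k0 \<le> l - 1"
    "\<forall>i. 1 \<le> i \<and> i < l \<and> i \<noteq> k0 \<longrightarrow> \<alpha> i > \<alpha> (Suc i)" "\<alpha> k0 \<ge> \<alpha> (Suc k0)"
    "\<forall>i\<in>{1..k0}. \<sigma> i \<in> J \<and> \<alpha> i = f (\<sigma> i)"
    "\<forall>i\<in>{k0+1..l}. \<sigma> i \<in> K \<and> \<alpha> i = g (\<sigma> i)"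
proof -
  have fin: "finite J" "finite K"
    using finite_subset[OF _ finite_atLeastAtMost] part(1) by blast+
  obtain r where r: "bij_betw r {1..card J} J"
    "\<forall>i j. 1 \<le> i \<longrightarrow> i < j \<longrightarrow> j \<le> card J \<longrightarrow> f (r j) < f (r i)"
    using exists_decreasing_enumeration[OF fin(1) inj(1)] by blast
  obtain s where s: "bij_betw s {1..card K} K"
    "\<forall>i j. 1 \<le> i \<longrightarrow> i < j \<longrightarrow> j \<le> card K \<longrightarrow> g (s j) < g (s i)"
    using exists_decreasing_enumeration[OF fin(2) inj(2)] by blast
  define k0 where "k0 = card J"
  have l: "l = k0 + card K"
    using card_Un_disjoint[OF fin part(2)] part(1) by (simp add: k0_def)
  have k0: "1 \<le> k0" "k0 < l"
    using ne fin l by (auto simp: k0_def Suc_le_eq card_gt_0_iff)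
  define \<sigma> where "\<sigma> = (\<lambda>i. if i \<in> {1..k0} then r i else if i \<in> {k0 + 1..l} then s (i - k0) else i)"
  define \<alpha> where "\<alpha> i = (if i \<le> k0 then f (r i) else g (s (i - k0)))" for i
  have perm: "\<sigma> permutes {1..l}"
    using permutes_concat[OF r(1) s(1) part(2) part(1)[unfolded l k0_def]]
    unfolding \<sigma>_def l k0_def .
  have J: "\<forall>i\<in>{1..k0}. \<sigma> i \<in> J \<and> \<alpha> i = f (\<sigma> i)"
    using bij_betwE[OF r(1)] by (auto simp: \<sigma>_def \<alpha>_def k0_def)
  have K: "\<forall>i\<in>{k0+1..l}. \<sigma> i \<in> K \<and> \<alpha> i = g (\<sigma> i)"
  proof
    fix i assume i: "i \<in> {k0+1..l}"
    then have "i - k0 \<in> {1..card K}"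
      using l by auto
    then show "\<sigma> i \<in> K \<and> \<alpha> i = g (\<sigma> i)"
      using bij_betwE[OF s(1)] i by (auto simp: \<sigma>_def \<alpha>_def)
  qed
  have dec: "\<forall>i. 1 \<le> i \<and> i < l \<and> i \<noteq> k0 \<longrightarrow> \<alpha> i > \<alpha> (Suc i)"
    using r(2) s(2) l by (auto simp: \<alpha>_def k0_def not_le Suc_diff_le)
  have "k0 \<in> {1..k0}" "Suc k0 \<in> {k0+1..l}"
    using k0 by auto
  then have mid: "\<alpha> k0 \<ge> \<alpha> (Suc k0)"
    using J K le by auto
  show ?thesis
    by (rule that[OF perm k0(1) _ dec mid J K]) (use k0 in simp)
qed

subsection \<open>Disconnected unions\<close>

lemma not_connected_UN_imp_split:
  assumes "\<not> connected (\<Union>i\<in>I. W i)" and "\<And>i. i \<in> I \<Longrightarrow> connected (W i) \<and> W i \<noteq> {}"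
  obtains J K where "I = J \<union> K" "J \<inter> K = {}" "J \<noteq> {}" "K \<noteq> {}" "\<forall>i\<in>J. \<forall>j\<in>K. W i \<inter> W j = {}"
proof -
  let ?U = "\<Union>i\<in>I. W i"
  obtain A B where AB: "open A" "open B" "?U \<subseteq> A \<union> B" "A \<inter> B \<inter> ?U = {}"
    "A \<inter> ?U \<noteq> {}" "B \<inter> ?U \<noteq> {}"
    using assms(1) unfolding connected_def by blast
  have side: "W i \<subseteq> A \<and> W i \<inter> B = {} \<or> W i \<subseteq> B \<and> W i \<inter> A = {}" if "i \<in> I" for i
  proof -
    have "W i \<subseteq> A \<union> B" "A \<inter> B \<inter> W i = {}"
      using AB(3,4) that by blast+
    then show ?thesis
      using connectedD[of "W i" A B] assms(2) that AB(1,2) by blast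
  qed
  define J where "J = {i \<in> I. W i \<subseteq> A}"
  define K where "K = {i \<in> I. W i \<subseteq> B}"
  have "I = J \<union> K"
    using side by (auto simp: J_def K_def)
  moreover have "J \<inter> K = {}"
    using side assms(2) unfolding J_def K_def by blast
  moreover have "J \<noteq> {}" "K \<noteq> {}"
    using AB(5,6) side by (fastforce simp: J_def K_def)+
  moreover have "\<forall>i\<in>J. \<forall>j\<in>K. W i \<inter> W j = {}"
    using side by (fastforce simp: J_def K_def)
  ultimately show ?thesis
    using that by blast
qed

lemma not_connected_UN_if_separated:
  assumes "open E1" "open E2" "E1 \<inter> E2 = {}" "\<forall>i\<in>I. W i \<subseteq> E1 \<or> W i \<subseteq> E2"
    and "i \<in> I" "W i \<noteq> {}" "W i \<subseteq> E1" "j \<in> I" "W j \<noteq> {}" "W j \<subseteq> E2"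
  shows "\<not> connected (\<Union>i\<in>I. W i)"
proof -
  have "(\<Union>i\<in>I. W i) \<subseteq> E1 \<union> E2" "E1 \<inter> (\<Union>i\<in>I. W i) \<noteq> {}" "E2 \<inter> (\<Union>i\<in>I. W i) \<noteq> {}"
    using assms(4-10) by blast+
  then show ?thesis
    using assms(1-3) unfolding connected_def by blast
qed

definition halfspace_chain :: "(nat \<Rightarrow> (real ^ ('p::finite + 'q::finite)) set) \<Rightarrow> nat \<Rightarrow> bool" where
  "halfspace_chain W l \<longleftrightarrow>
    (\<exists>v \<alpha> k0 \<sigma>. v \<in> lightcone - {0} \<and> \<sigma> permutes {1..l} \<and> 1 \<le> k0 \<and> k0 \<le> l - 1 \<and>
        (\<forall>i. 1 \<le> i \<and> i < l \<and> i \<noteq> k0 \<longrightarrow> \<alpha> i > \<alpha> (Suc i)) \<and> \<alpha> k0 \<ge> \<alpha> (Suc k0) \<and>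
        (\<forall>i\<in>{1..k0}. W (\<sigma> i) = Hpq v (\<alpha> i)) \<and>
        (\<forall>i\<in>{k0+1..l}. W (\<sigma> i) = Hpq (- v) (- \<alpha> i)))"

definition cone_pair :: "(nat \<Rightarrow> (real ^ ('p::finite + 'q::finite)) set) \<Rightarrow> nat \<Rightarrow> bool" where
  "cone_pair W l \<longleftrightarrow>
    l = 2 \<and> (\<exists>v \<sigma>. \<sigma> permutes {1..l} \<and> W (\<sigma> 1) = (+) v ` U_S \<and> W (\<sigma> 2) = (+) v ` U_T)"

lemma Hpq_antimono: "\<alpha> \<le> \<beta> \<Longrightarrow> Hpq v \<beta> \<subseteq> Hpq v \<alpha>"
  by (auto simp: Hpq_def)

lemma antitone_if_decreasing_chain:
  fixes \<alpha> :: "nat \<Rightarrow> 'a::linorder"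
  assumes "1 \<le> m" "m \<le> m'" "m' \<le> l"
    and "\<forall>i. 1 \<le> i \<and> i < l \<and> i \<noteq> k0 \<longrightarrow> \<alpha> i > \<alpha> (Suc i)" "\<alpha> k0 \<ge> \<alpha> (Suc k0)"
  shows "\<alpha> m' \<le> \<alpha> m"
proof (rule lift_Suc_antimono_le_ivl[where N = "{1..<l}"])
  show "\<alpha> (Suc n) \<le> \<alpha> n" if "n \<in> {1..<l}" for n
    using that assms(4,5) by (cases "n = k0") auto
qed (use assms(1-3) in auto)

lemma halfspace_chain_imp_not_connected:
  assumes "\<forall>i\<in>{1..l}. W i \<noteq> {}" "halfspace_chain W l"
  shows "\<not> connected (\<Union>i\<in>{1..l}. W i)"
proof -
  obtain v \<alpha> k0 \<sigma> where \<sigma>: "\<sigma> permutes {1..l}" and k0: "1 \<le> k0" "k0 \<le> l - 1"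
    and dec: "\<forall>i. 1 \<le> i \<and> i < l \<and> i \<noteq> k0 \<longrightarrow> \<alpha> i > \<alpha> (Suc i)" and mid: "\<alpha> k0 \<ge> \<alpha> (Suc k0)"
    and J: "\<forall>i\<in>{1..k0}. W (\<sigma> i) = Hpq v (\<alpha> i)" and K: "\<forall>i\<in>{k0+1..l}. W (\<sigma> i) = Hpq (- v) (- \<alpha> i)"
    using assms(2) unfolding halfspace_chain_def by blast
  have antitone: "\<alpha> m' \<le> \<alpha> m" if "1 \<le> m" "m \<le> m'" "m' \<le> l" for m m'
    using antitone_if_decreasing_chain[OF that dec mid] .
  define E1 where "E1 = Hpq v (\<alpha> k0)"
  define E2 where "E2 = Hpq (- v) (- \<alpha> (Suc k0))"
  have sides: "W (\<sigma> m) \<subseteq> E1 \<or> W (\<sigma> m) \<subseteq> E2" if "m \<in> {1..l}" for m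
  proof (cases "m \<le> k0")
    case True
    then show ?thesis
      using J that antitone[of m k0] k0 by (simp add: E1_def Hpq_antimono)
  next
    case False
    then show ?thesis
      using K that antitone[of "Suc k0" m] by (simp add: E2_def Hpq_antimono)
  qed
  have "\<forall>i\<in>{1..l}. W i \<subseteq> E1 \<or> W i \<subseteq> E2"
  proof
    fix i assume "i \<in> {1..l}"
    then obtain m where "m \<in> {1..l}" "i = \<sigma> m"
      using permutes_image[OF \<sigma>] by blast
    then show "W i \<subseteq> E1 \<or> W i \<subseteq> E2"
      using sides by blast
  qed
  moreover have "E1 \<inter> E2 = {}"
    using mid by (auto simp: E1_def E2_def Hpq_def bpq_minus_left)
  moreover have "k0 \<in> {1..l}" "Suc k0 \<in> {1..l}" "W (\<sigma> k0) = E1" "W (\<sigma> (Suc k0)) = E2"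
    using k0 J K by (auto simp: E1_def E2_def)
  ultimately show ?thesis
    using assms(1) permutes_in_image[OF \<sigma>]
    by (intro not_connected_UN_if_separated[of E1 E2 _ _ "\<sigma> k0" "\<sigma> (Suc k0)"])
      (auto simp: E1_def E2_def open_Hpq)
qed

lemma cone_pair_imp_not_connected:
  assumes "\<forall>i\<in>{1..l}. W i \<noteq> {} \<and> open (W i)" "cone_pair W l"
  shows "\<not> connected (\<Union>i\<in>{1..l}. W i)"
proof -
  obtain v \<sigma> where l: "l = 2" and \<sigma>: "\<sigma> permutes {1..l}"
    and W: "W (\<sigma> 1) = (+) v ` U_S" "W (\<sigma> 2) = (+) v ` U_T"
    using assms(2) unfolding cone_pair_def by blast
  have in_range: "\<sigma> 1 \<in> {1..l}" "\<sigma> 2 \<in> {1..l}"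
    using permutes_in_image[OF \<sigma>] l by auto
  have "{1..l} = {1, 2}"
    using l by auto
  then have "{1..l} = \<sigma> ` {1, 2}"
    using permutes_image[OF \<sigma>] by simp
  then have "\<forall>i\<in>{1..l}. W i \<subseteq> W (\<sigma> 1) \<or> W i \<subseteq> W (\<sigma> 2)"
    by auto
  moreover have "W (\<sigma> 1) \<inter> W (\<sigma> 2) = {}"
    unfolding W translate_U_S translate_U_T by auto
  ultimately show ?thesis
    using assms(1) in_range
    by (intro not_connected_UN_if_separated[of "W (\<sigma> 1)" "W (\<sigma> 2)" _ _ "\<sigma> 1" "\<sigma> 2"]) auto
qed

lemma cone_pair_intro:
  assumes "{1..l} = {a, b}" "a \<noteq> b" "W a = (+) v ` U_S" "W b = (+) v ` U_T"
  shows "cone_pair W l"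
proof -
  have "l = card {1..l}"
    by simp
  also have "\<dots> = card {a, b}"
    using assms(1) by (simp only:)
  also have "\<dots> = 2"
    using assms(2) by simp
  finally have l: "l = 2" .
  then have "{1..l} = {1, 2}"
    by auto
  with assms(1) have "{a, b} = {1, 2}"
    by simp
  then have "a = 1 \<and> b = 2 \<or> a = 2 \<and> b = 1"
    by (simp add: doubleton_eq_iff)
  then obtain \<sigma> where "\<sigma> permutes {1..l}" "\<sigma> 1 = a" "\<sigma> 2 = b"
  proof
    assume "a = 1 \<and> b = 2"
    then show ?thesis
      using that[of id] by (simp add: permutes_id)
  next
    assume "a = 2 \<and> b = 1"
    then show ?thesis
      using that[of "Transposition.transpose 1 2"] l by (simp add: permutes_swap_id)
  qed
  then show ?thesis
    using l assms(3,4) unfolding cone_pair_def by blast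
qed

lemma split_at_complementary_pair:
  assumes inj: "inj_on W I" and it: "\<forall>i\<in>I. intersection_type (W i)"
    and split: "I = J \<union> K" "J \<inter> K = {}" "K \<noteq> {}" "\<forall>i\<in>J. \<forall>j\<in>K. W i \<inter> W j = {}"
    and i: "i \<in> J" "W i = X"
    and opp: "\<And>Y. intersection_type Y \<Longrightarrow> X \<inter> Y = {} \<Longrightarrow> Y = X'"
      "\<And>Y. intersection_type Y \<Longrightarrow> X' \<inter> Y = {} \<Longrightarrow> Y = X"
  shows "\<exists>j. I = {i, j} \<and> i \<noteq> j \<and> W j = X'"
proof -
  obtain j where j: "j \<in> K"
    using split(3) by blast
  have WK: "W k = X'" if "k \<in> K" for k
    using opp(1)[of "W k"] it split(1,4) i that by blast
  have "k = j" if "k \<in> K" for k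
    using inj_onD[OF inj, of k j] WK[OF that] WK[OF j] that j split(1) by blast
  then have "K = {j}"
    using j by blast
  moreover have "k = i" if "k \<in> J" for k
  proof -
    have "X' \<inter> W k = {}"
      using split(4) that j WK[OF j] by blast
    then have "W k = X"
      using opp(2) it split(1) that by blast
    then show "k = i"
      using inj_onD[OF inj, of k i] i that split(1) by blast
  qed
  then have "J = {i}"
    using i(1) by blast
  ultimately show ?thesis
    using split(1,2) WK j i(1) by blast
qed

lemma split_with_cone_imp_cone_pair:
  fixes W :: "nat \<Rightarrow> (real ^ ('p::finite + 'q::finite)) set"
  assumes inj: "inj_on W {1..l}" and it: "\<forall>i\<in>{1..l}. intersection_type (W i)"
    and split: "{1..l} = J \<union> K" "J \<inter> K = {}" "J \<noteq> {}" "K \<noteq> {}" "\<forall>i\<in>J. \<forall>j\<in>K. W i \<inter> W j = {}"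
    and cone: "i \<in> {1..l}" "W i = (+) v0 ` U_S \<or> W i = (+) v0 ` U_T"
  shows "cone_pair W l"
proof -
  have pair: "\<exists>j. {1..l} = {i, j} \<and> i \<noteq> j \<and> W j = X'"
    if "W i = X" "\<And>Y. intersection_type Y \<Longrightarrow> X \<inter> Y = {} \<Longrightarrow> Y = X'"
      "\<And>Y. intersection_type Y \<Longrightarrow> X' \<inter> Y = {} \<Longrightarrow> Y = X" for X X' :: "(real ^ ('p + 'q)) set"
  proof (cases "i \<in> J")
    case True
    then show ?thesis
      using split_at_complementary_pair[OF inj it split(1,2,4,5) True that] by blast
  next
    case False
    then have "i \<in> K" "{1..l} = K \<union> J" "K \<inter> J = {}" "\<forall>i\<in>K. \<forall>j\<in>J. W i \<inter> W j = {}"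
      using cone(1) split by blast+
    then show ?thesis
      using split_at_complementary_pair[OF inj it _ _ split(3) _ _ that] by blast
  qed
  from cone(2) show ?thesis
  proof
    assume S: "W i = (+) v0 ` U_S"
    then obtain j where "{1..l} = {i, j}" "i \<noteq> j" "W j = (+) v0 ` U_T"
      using pair[of "(+) v0 ` U_S" "(+) v0 ` U_T", OF _ disjoint_U_S_translate disjoint_U_T_translate]
      by blast
    then show ?thesis
      using S by (intro cone_pair_intro)
  next
    assume T: "W i = (+) v0 ` U_T"
    then obtain j where "{1..l} = {j, i}" "j \<noteq> i" "W j = (+) v0 ` U_S"
      using pair[of "(+) v0 ` U_T" "(+) v0 ` U_S", OF _ disjoint_U_T_translate disjoint_U_S_translate]
      by (metis insert_commute)
    then show ?thesis
      using T by (intro cone_pair_intro)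
  qed
qed

lemma split_of_halfspaces_common_normal:
  fixes W :: "nat \<Rightarrow> (real ^ ('p::finite + 'q::finite)) set"
  assumes hs: "\<forall>i\<in>I. \<exists>v \<alpha>. v \<in> lightcone - {0} \<and> W i = Hpq v \<alpha>"
    and split: "I = J \<union> K" "J \<noteq> {}" "K \<noteq> {}" "\<forall>i\<in>J. \<forall>j\<in>K. W i \<inter> W j = {}"
  obtains v a b where "v \<in> lightcone - {0}" "\<forall>i\<in>J. W i = Hpq v (a i)" "\<forall>j\<in>K. W j = Hpq (- v) (b j)"
proof -
  obtain i0 j0 where i0: "i0 \<in> J" and j0: "j0 \<in> K"
    using split(2,3) by blast
  obtain v \<alpha>0 where v: "v \<in> lightcone - {0}" "W i0 = Hpq v \<alpha>0"
    using hs split(1) i0 by blast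
  have "\<exists>\<beta>. W j = Hpq (- v) \<beta>" if "j \<in> K" for j
    using hs split(1,4) Hpq_disjoint_imp_opposite[of v _ \<alpha>0] v i0 that
    by (metis DiffE UnCI singletonI)
  then obtain b where b: "\<forall>j\<in>K. W j = Hpq (- v) (b j)"
    by metis
  have "\<exists>\<alpha>. W i = Hpq v \<alpha>" if "i \<in> J" for i
    using hs split(1,4) Hpq_disjoint_imp_opposite[of "- v" _ "b j0"] v b j0 that
    by (metis DiffE Int_commute UnCI minus_minus neg_equal_0_iff_equal singletonI)
  then obtain a where "\<forall>i\<in>J. W i = Hpq v (a i)"
    by metis
  then show ?thesis
    using that v(1) b by blast
qed

lemma inj_on_parameter:
  assumes "inj_on W I" "\<forall>i\<in>I. W i = F (h i)"
  shows "inj_on h I"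
  using assms by (auto simp: inj_on_def)

lemma split_of_halfspaces_imp_halfspace_chain:
  fixes W :: "nat \<Rightarrow> (real ^ ('p::finite + 'q::finite)) set"
  assumes inj: "inj_on W {1..l}"
    and hs: "\<forall>i\<in>{1..l}. \<exists>v \<alpha>. v \<in> lightcone - {0} \<and> W i = Hpq v \<alpha>"
    and split: "{1..l} = J \<union> K" "J \<inter> K = {}" "J \<noteq> {}" "K \<noteq> {}" "\<forall>i\<in>J. \<forall>j\<in>K. W i \<inter> W j = {}"
  shows "halfspace_chain W l"
proof -
  obtain v a b where v: "v \<in> lightcone - {0}"
    and a: "\<forall>i\<in>J. W i = Hpq v (a i)" and b: "\<forall>j\<in>K. W j = Hpq (- v) (b j)"
    using split_of_halfspaces_common_normal[OF hs split(1,3-5)] by blast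
  have sub: "J \<subseteq> {1..l}" "K \<subseteq> {1..l}"
    using split(1) by auto
  have inj_a: "inj_on a J"
    using inj_on_parameter[where F = "Hpq v" and h = a, OF inj_on_subset[OF inj sub(1)] a] .
  have inj_b: "inj_on (\<lambda>j. - b j) K"
    using b inj_on_parameter[where F = "\<lambda>\<beta>. Hpq (- v) (- \<beta>)" and h = "\<lambda>j. - b j",
        OF inj_on_subset[OF inj sub(2)]] by simp
  have le: "\<forall>i\<in>J. \<forall>j\<in>K. - b j \<le> a i"
  proof (intro ballI)
    fix i j assume "i \<in> J" "j \<in> K"
    then have "Hpq v (a i) \<inter> Hpq (- v) (b j) = {}"
      using split(5) a b by metis
    with v show "- b j \<le> a i"
      by (intro Hpq_opposite_disjoint_imp_le) auto
  qed
  obtain \<sigma> \<alpha> k0 where "\<sigma> permutes {1..l}" "1 \<le> k0" "k0 \<le> l - 1"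
    "\<forall>i. 1 \<le> i \<and> i < l \<and> i \<noteq> k0 \<longrightarrow> \<alpha> i > \<alpha> (Suc i)" "\<alpha> k0 \<ge> \<alpha> (Suc k0)"
    and J: "\<forall>i\<in>{1..k0}. \<sigma> i \<in> J \<and> \<alpha> i = a (\<sigma> i)"
    and K: "\<forall>i\<in>{k0+1..l}. \<sigma> i \<in> K \<and> \<alpha> i = - b (\<sigma> i)"
    by (rule merge_decreasing_enumerations[OF split(1)[symmetric] split(2-4) inj_a inj_b le])
  moreover have "\<forall>i\<in>{1..k0}. W (\<sigma> i) = Hpq v (\<alpha> i)"
    using J a by simp
  moreover have "\<forall>i\<in>{k0+1..l}. W (\<sigma> i) = Hpq (- v) (- \<alpha> i)"
    using K b by simp
  ultimately show ?thesis
    unfolding halfspace_chain_def using v by blast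
qed

lemma split_imp_halfspace_chain_or_cone_pair:
  fixes W :: "nat \<Rightarrow> (real ^ ('p::finite + 'q::finite)) set"
  assumes inj: "inj_on W {1..l}" and it: "\<forall>i\<in>{1..l}. intersection_type (W i)"
    and split: "{1..l} = J \<union> K" "J \<inter> K = {}" "J \<noteq> {}" "K \<noteq> {}" "\<forall>i\<in>J. \<forall>j\<in>K. W i \<inter> W j = {}"
  shows "halfspace_chain W l \<or> cone_pair W l"
proof (cases "\<exists>i\<in>{1..l}. \<exists>v0. W i = (+) v0 ` U_S \<or> W i = (+) v0 ` U_T")
  case True
  then show ?thesis
    using split_with_cone_imp_cone_pair[OF inj it split] by blast
next
  case False
  then have "\<forall>i\<in>{1..l}. \<exists>v \<alpha>. v \<in> lightcone - {0} \<and> W i = Hpq v \<alpha>"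
    using it unfolding intersection_type_def by blast
  then show ?thesis
    using split_of_halfspaces_imp_halfspace_chain[OF inj _ split] by blast
qed

theorem lemma5p10:
  fixes W :: "nat \<Rightarrow> (real ^ ('p::finite + 'q::finite)) set" and l :: nat
  assumes "2 \<le> CARD('p)" and "CARD('p) \<le> CARD('q)"
    and "inj_on W {1..l}"
    and "\<forall>i\<in>{1..l}. W i \<noteq> {} \<and> open (W i) \<and> intersection_type (W i)"
  shows "\<not> connected (\<Union>i\<in>{1..l}. W i) \<longleftrightarrow>
    ((\<exists>v \<alpha> k0 \<sigma>. v \<in> lightcone - {0} \<and> \<sigma> permutes {1..l} \<and> 1 \<le> k0 \<and> k0 \<le> l - 1 \<and>
        (\<forall>i. 1 \<le> i \<and> i < l \<and> i \<noteq> k0 \<longrightarrow> \<alpha> i > \<alpha> (Suc i)) \<and> \<alpha> k0 \<ge> \<alpha> (Suc k0) \<and>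
        (\<forall>i\<in>{1..k0}. W (\<sigma> i) = Hpq v (\<alpha> i)) \<and>
        (\<forall>i\<in>{k0+1..l}. W (\<sigma> i) = Hpq (- v) (- \<alpha> i)))
     \<or>
     (l = 2 \<and> (\<exists>v \<sigma>. \<sigma> permutes {1..l} \<and>
        W (\<sigma> 1) = (\<lambda>u. v + u) ` U_S \<and> W (\<sigma> 2) = (\<lambda>u. v + u) ` U_T)))"
proof -
  have "\<not> connected (\<Union>i\<in>{1..l}. W i) \<longleftrightarrow> halfspace_chain W l \<or> cone_pair W l"
  proof
    assume "\<not> connected (\<Union>i\<in>{1..l}. W i)"
    moreover have "connected (W i) \<and> W i \<noteq> {}" if "i \<in> {1..l}" for i
      using assms connected_intersection_type that by (metis order_trans)
    ultimately obtain J K where "{1..l} = J \<union> K" "J \<inter> K = {}" "J \<noteq> {}" "K \<noteq> {}"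
      "\<forall>i\<in>J. \<forall>j\<in>K. W i \<inter> W j = {}"
      by (rule not_connected_UN_imp_split)
    then show "halfspace_chain W l \<or> cone_pair W l"
      using split_imp_halfspace_chain_or_cone_pair assms(3,4) by blast
  next
    assume "halfspace_chain W l \<or> cone_pair W l"
    then show "\<not> connected (\<Union>i\<in>{1..l}. W i)"
      using halfspace_chain_imp_not_connected cone_pair_imp_not_connected assms(4) by blast
  qed
  then show ?thesis
    unfolding halfspace_chain_def cone_pair_def .
qed

end
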